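(* Let $m\ge 1$ and $1\le t\le 2^{m-1}$ be integers and let $p=t/2^m$ (so $0<p\le 1/2$). Let $f:\{0,1\}^n\to\mathbb{R}$ and let $g=\mathrm{Red}(f):\{0,1\}^{mn}\to\mathbb{R}$ be the reduced function defined below. Then for every $1\le d\le n$, \[ \sum_{S\subseteq\{1,\dots,mn\},\,|S|=d}\hat g(S)^2\;\ge\;\Big(\frac{p\lfloor \log(1/p)\rfloor}{1-p}\Big)^d\sum_{S\subseteq\{1,\dots,n\},\,|S|=d}\hat f(S)^2, \] where the Fourier–Walsh coefficients of $g$ are taken with respect to the uniform measure $\mu_{1/2}$ on $\{0,1\}^{mn}$ and those of $f$ with respect to $\mu_p$ on $\{0,1\}^n$.
   Context: For $0<p<1$, $\mu_p$ denotes the product measure on $\{0,1\}^n$ given by $\mu_p(x)=p^{\sum_i x_i}(1-p)^{n-\sum_i x_i}$; $\mu_{1/2}$ is the uniform measure. Elements of $\{0,1\}^n$ are identified with subsets of $\{1,\dots,n\}$ in the natural way. For $S,T\subseteq\{1,\dots,n\}$ let $u_S(T)=\big(-\sqrt{(1-p)/p}\big)^{|S\cap T|}\big(\sqrt{p/(1-p)}\big)^{|S\setminus T|}$ (for $p=1/2$, $u_S(T)=(-1)^{|S\cap T|}$). The $u_S$ form an orthonormal basis of $L^2(\mu_p)$, and every $f$ has a unique expansion $f=\sum_S\hat f(S)u_S$ with $\hat f(S)=\mathbb{E}_{\mu_p}[f u_S]$ (the Fourier–Walsh coefficients w.r.t. $\mu_p$). Reduction: write $y\in\{0,1\}^{mn}$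 as $y=(y^1,\dots,y^n)$ with $y^i=(y^i_1,\dots,y^i_m)\in\{0,1\}^m$, where $y^i_j$ is the coordinate $(i-1)m+j$ of $y$. Let $\mathrm{Bin}(y^i)=\sum_{j=0}^{m-1}2^j y^i_{m-j}\in\{0,\dots,2^m-1\}$, and $h:\{0,1\}^m\to\{0,1\}$, $h(y^i)=1$ if $\mathrm{Bin}(y^i)\ge 2^m-t$ and $h(y^i)=0$ otherwise. Then $\mathrm{Red}(f)=g$ is defined by $g(y)=f(h(y^1),\dots,h(y^n))$. Here $\log$ denotes the base-2 logarithm. *)

theory Defs
  imports Complex_Main
begin

text \<open>Points of the cube {0,1}^n are identified with subsets of {1..n}.\<close>

definition mu :: "nat \<Rightarrow> real \<Rightarrow> nat set \<Rightarrow> real" where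
  "mu n p T = p ^ card T * (1 - p) ^ (n - card T)"

definition u :: "real \<Rightarrow> nat set \<Rightarrow> nat set \<Rightarrow> real" where
  "u p S T = (- sqrt ((1 - p) / p)) ^ card (S \<inter> T) * (sqrt (p / (1 - p))) ^ card (S - T)"

definition fcoef :: "nat \<Rightarrow> real \<Rightarrow> (nat set \<Rightarrow> real) \<Rightarrow> nat set \<Rightarrow> real" where
  "fcoef n p f S = (\<Sum>T\<in>Pow {1..n}. mu n p T * f T * u p S T)"

text \<open>Coordinate y^i_j of y (as a subset of {1..mn}) is coordinate (i-1)m+j.\<close>
definition blk :: "nat \<Rightarrow> nat set \<Rightarrow> nat \<Rightarrow> nat \<Rightarrow> nat" where
  "blk m Y i j = (if (i - 1) * m + j \<in> Y then 1 else 0)"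

definition Bin :: "nat \<Rightarrow> nat set \<Rightarrow> nat \<Rightarrow> nat" where
  "Bin m Y i = (\<Sum>j=0..<m. 2 ^ j * blk m Y i (m - j))"

definition hfun :: "nat \<Rightarrow> nat \<Rightarrow> nat set \<Rightarrow> nat \<Rightarrow> bool" where
  "hfun m t Y i \<longleftrightarrow> Bin m Y i \<ge> 2 ^ m - t"

definition Red :: "nat \<Rightarrow> nat \<Rightarrow> nat \<Rightarrow> (nat set \<Rightarrow> real) \<Rightarrow> nat set \<Rightarrow> real" where
  "Red n m t f Y = f {i \<in> {1..n}. hfun m t Y i}"

end

theory Submission
  imports Defs "HOL-Library.Nat_Bijection" "HOL-Library.FuncSet" "HOL-Library.Disjoint_Sets"
begin

(* Since g(y) = f(h(y^1), ..., h(y^n)), the uniform Fourier coefficient of g at a set T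
   meeting each block in at most one coordinate factorizes over the blocks. Put S = {i. T meets
   block i} and let T meet block i in its j-th most significant coordinate with t 2^j \<le> 2^m.
   The t largest m-bit numbers all start with j ones, so that coordinate is 1 whenever h = 1,
   and counting inside each block gives ghat(T) = (p / (1 - p))^(|S|/2) fhat(S). Every block
   offers \<lfloor>log (1/p)\<rfloor> such coordinates, so each fhat(S)^2 reappears
   \<lfloor>log (1/p)\<rfloor>^|S| times among the squared coefficients of g at distinct sets of size |S|. *)

lemma sum_Pow_UN_prod:
  fixes \<psi> :: "'i \<Rightarrow> 'a set \<Rightarrow> 'b :: comm_semiring_1"
  assumes "finite I" "\<And>i. i \<in> I \<Longrightarrow> finite (B i)" "disjoint_family_on B I"
  shows "(\<Sum>Y\<in>Pow (\<Union>i\<in>I. B i). \<Prod>i\<in>I. \<psi> i (Y \<inter> B i)) = (\<Prod>i\<in>I. \<Sum>Z\<in>Pow (B i). \<psi> i Z)"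
proof -
  have "(\<Prod>i\<in>I. \<Sum>Z\<in>Pow (B i). \<psi> i Z) = (\<Sum>g\<in>(\<Pi>\<^sub>E i\<in>I. Pow (B i)). \<Prod>i\<in>I. \<psi> i (g i))"
    using assms by (intro prod_sum_PiE) auto
  also have "\<dots> = (\<Sum>Y\<in>Pow (\<Union>i\<in>I. B i). \<Prod>i\<in>I. \<psi> i (Y \<inter> B i))"
  proof (rule sum.reindex_bij_witness[of _ "\<lambda>Y. \<lambda>i\<in>I. Y \<inter> B i" "\<lambda>g. \<Union>i\<in>I. g i"])
    fix g assume g: "g \<in> (\<Pi>\<^sub>E i\<in>I. Pow (B i))"
    have "(\<Union>j\<in>I. g j) \<inter> B i = g i" if "i \<in> I" for i
      using g that \<open>disjoint_family_on B I\<close> by (fastforce simp: disjoint_family_on_def)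
    then show "(\<lambda>i\<in>I. (\<Union>j\<in>I. g j) \<inter> B i) = g"
      using PiE_restrict[OF g] by (metis (no_types, lifting) restrict_ext)
    show "(\<Prod>i\<in>I. \<psi> i ((\<Union>j\<in>I. g j) \<inter> B i)) = (\<Prod>i\<in>I. \<psi> i (g i))"
      using \<open>\<And>i. i \<in> I \<Longrightarrow> (\<Union>j\<in>I. g j) \<inter> B i = g i\<close> by simp
  qed auto
  finally show ?thesis ..
qed

lemma sum_Pow_sign_member:
  assumes "finite B" "q \<in> B"
  shows "(\<Sum>Z\<in>Pow B. (if q \<in> Z then -1 else 1 :: 'a :: comm_ring_1)) = 0"
proof -
  define B' where "B' = B - {q}"
  have B: "B = insert q B'" "q \<notin> B'" "finite B'" using assms unfolding B'_def by auto
  have "(\<Sum>Z\<in>Pow B. (if q \<in> Z then -1 else 1 :: 'a))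
      = (\<Sum>Z\<in>Pow B'. (if q \<in> Z then -1 else 1)) + (\<Sum>Z\<in>insert q ` Pow B'. (if q \<in> Z then -1 else 1))"
    unfolding B(1) Pow_insert using B by (intro sum.union_disjoint) auto
  also have "(\<Sum>Z\<in>insert q ` Pow B'. (if q \<in> Z then -1 else 1 :: 'a)) = (\<Sum>Z\<in>Pow B'. -1)"
    using B by (subst sum.reindex) (auto intro!: inj_onI)
  also have "(\<Sum>Z\<in>Pow B'. (if q \<in> Z then -1 else 1 :: 'a)) = (\<Sum>Z\<in>Pow B'. 1)"
    using B by (intro sum.cong) auto
  finally show ?thesis by (simp add: sum_negf)
qed

lemma set_encode_less:
  assumes "A \<subseteq> {..<m}"
  shows "set_encode A < 2 ^ m"
proof -
  have "set_encode A \<le> (\<Sum>j<m. 2 ^ j)"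
    unfolding set_encode_def using assms by (intro sum_mono2) auto
  also have "\<dots> < 2 ^ m" by (simp add: lessThan_atLeast0 sum_power2)
  finally show ?thesis .
qed

lemma set_encode_add_power_less:
  assumes "A \<subseteq> {..<m} - {a}" "a < m"
  shows "set_encode A + 2 ^ a < 2 ^ m"
proof -
  have "finite A" using assms finite_subset[of A "{..<m}"] by blast
  then have "set_encode A + 2 ^ a = set_encode (insert a A)"
    using assms by (subst set_encode_insert) auto
  also have "\<dots> < 2 ^ m" using assms by (intro set_encode_less) auto
  finally show ?thesis .
qed

lemma bij_betw_set_encode_Pow_lessThan: "bij_betw set_encode (Pow {..<m}) {..<2 ^ m}"
proof (rule bij_betw_imageI)
  show "inj_on set_encode (Pow {..<m})"
    by (rule inj_on_subset[OF inj_on_set_encode]) (auto intro: finite_subset)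
  have "set_decode v \<subseteq> {..<m}" if "v < 2 ^ m" for v
  proof
    fix x assume "x \<in> set_decode v"
    then have "0 < v div 2 ^ x" by (auto simp: set_decode_def intro: odd_pos)
    then have "2 ^ x \<le> v" by (simp add: div_greater_zero_iff)
    with that show "x \<in> {..<m}" by (metis lessThan_iff le_less_trans power_less_imp_less_exp one_less_numeral_iff semiring_norm(76))
  qed
  then have "v \<in> set_encode ` Pow {..<m}" if "v < 2 ^ m" for v
    using that by (intro image_eqI[of v _ "set_decode v"]) auto
  then show "set_encode ` Pow {..<m} = {..<2 ^ m}"
    by (auto intro: set_encode_less)
qed

definition block :: "nat \<Rightarrow> nat \<Rightarrow> nat set" where
  "block m i = {(i - 1) * m + 1..(i - 1) * m + m}"

lemma block_pos_mem: "1 \<le> j \<Longrightarrow> j \<le> m \<Longrightarrow> (i - 1) * m + j \<in> block m i"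
  by (simp add: block_def)

lemma block_div: "x \<in> block m i \<Longrightarrow> (x - 1) div m = i - 1"
proof -
  assume "x \<in> block m i"
  then have "x - 1 = (i - 1) * m + (x - 1 - (i - 1) * m)" "x - 1 - (i - 1) * m < m"
    by (auto simp: block_def)
  then show ?thesis by (metis div_mult_self3 div_less add.commute add_0 less_nat_zero_code not_gr0)
qed

lemma disjoint_family_on_block: "disjoint_family_on (block m) {1..}"
  unfolding disjoint_family_on_def
proof (intro ballI impI)
  fix i j :: nat assume "i \<in> {1..}" "j \<in> {1..}" "i \<noteq> j"
  then have "i - 1 \<noteq> j - 1" by auto
  then show "block m i \<inter> block m j = {}" using block_div[of _ m i] block_div[of _ m j] by fastforce
qed

lemma UN_block: "(\<Union>i\<in>{1..n}. block m i) = {1..m * n}"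
proof (induction n)
  case (Suc n)
  have "{1..Suc n} = insert (Suc n) {1..n}" by auto
  then have "(\<Union>i\<in>{1..Suc n}. block m i) = {1..m * n} \<union> {n * m + 1..n * m + m}"
    using Suc by (simp add: block_def Un_commute)
  also have "\<dots> = {1..m * Suc n}" by (auto simp: mult.commute)
  finally show ?case .
qed (simp add: block_def)

(* Coordinate x of block i carries the weight 2 ^ block_digit m i x in Bin m Y i. *)
definition block_digit :: "nat \<Rightarrow> nat \<Rightarrow> nat \<Rightarrow> nat" where
  "block_digit m i x = (i - 1) * m + m - x"

lemma bij_betw_block_digit: "bij_betw (block_digit m i) (block m i) {..<m}"
  by (rule bij_betw_byWitness[where f' = "block_digit m i"]) (auto simp: block_def block_digit_def)

lemma Bin_eq_set_encode: "Bin m Z i = set_encode (block_digit m i ` (Z \<inter> block m i))"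
proof -
  have "Bin m Z i = (\<Sum>j\<in>{..<m}. if (i - 1) * m + m - j \<in> Z then 2 ^ j else 0)"
    unfolding Bin_def blk_def lessThan_atLeast0 by (intro sum.cong) auto
  also have "\<dots> = set_encode {j\<in>{..<m}. (i - 1) * m + m - j \<in> Z}"
    unfolding set_encode_def by (rule sum.inter_filter[symmetric]) simp
  also have "{j\<in>{..<m}. (i - 1) * m + m - j \<in> Z} = block_digit m i ` (Z \<inter> block m i)"
  proof -
    have "j = (i - 1) * m + m - ((i - 1) * m + m - j)" if "j < m" for j using that by simp
    then show ?thesis by (force simp: block_def block_digit_def image_iff)
  qed
  finally show ?thesis .
qed

lemma hfun_Int_block: "hfun m t (Z \<inter> block m i) i = hfun m t Z i"
  by (simp add: hfun_def Bin_eq_set_encode Int_assoc)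

lemma card_hfun_block:
  assumes "t \<le> 2 ^ m"
  shows "card {Z \<in> Pow (block m i). hfun m t Z i} = t"
proof -
  define enc where "enc Z = set_encode (block_digit m i ` Z)" for Z
  have bij: "bij_betw enc (Pow (block m i)) {..<2 ^ m}"
    unfolding enc_def using bij_betw_image_Pow[OF bij_betw_block_digit] bij_betw_set_encode_Pow_lessThan
    by (rule bij_betw_trans[unfolded comp_def])
  have "hfun m t Z i \<longleftrightarrow> 2 ^ m - t \<le> enc Z" if "Z \<in> Pow (block m i)" for Z
  proof -
    have "Z \<inter> block m i = Z" using that by blast
    then show ?thesis by (simp add: hfun_def Bin_eq_set_encode enc_def)
  qed
  then have "enc ` {Z \<in> Pow (block m i). hfun m t Z i} = {v \<in> enc ` Pow (block m i). 2 ^ m - t \<le> v}"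
    by blast
  also have "\<dots> = {v \<in> {..<2 ^ m}. 2 ^ m - t \<le> v}"
    using bij_betw_imp_surj_on[OF bij] by simp
  finally have "card {Z \<in> Pow (block m i). hfun m t Z i} = card {v \<in> {..<2 ^ m}. 2 ^ m - t \<le> v}"
    using card_image inj_on_subset[OF bij_betw_imp_inj_on[OF bij]] by (metis (no_types, lifting) mem_Collect_eq subsetI)
  also have "{v \<in> {..<2 ^ m}. 2 ^ m - t \<le> v} = {2 ^ m - t..<2 ^ m}" by auto
  finally show ?thesis using assms by simp
qed

lemma hfun_imp_leading_bit:
  assumes "hfun m t Z i" "1 \<le> j" "j \<le> m" "t * 2 ^ j \<le> 2 ^ m"
  shows "(i - 1) * m + j \<in> Z"
proof (rule ccontr)
  assume "(i - 1) * m + j \<notin> Z"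
  moreover have "x = (i - 1) * m + j" if "x \<in> block m i" "block_digit m i x = m - j" for x
    using that assms(2,3) by (auto simp: block_def block_digit_def)
  ultimately have "m - j \<notin> block_digit m i ` (Z \<inter> block m i)"
    by auto
  moreover have "block_digit m i ` (Z \<inter> block m i) \<subseteq> {..<m}"
    using bij_betw_block_digit[of m i] by (auto simp: bij_betw_def)
  ultimately have "block_digit m i ` (Z \<inter> block m i) \<subseteq> {..<m} - {m - j}"
    by blast
  then have "Bin m Z i + 2 ^ (m - j) < 2 ^ m"
    unfolding Bin_eq_set_encode using assms(2,3) by (intro set_encode_add_power_less) auto
  moreover have "t \<le> 2 ^ (m - j)"
  proof -
    have "t * 2 ^ j \<le> 2 ^ (m - j) * 2 ^ j"
      using assms(3,4) by (simp flip: power_add)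
    then show ?thesis by simp
  qed
  ultimately show False using assms(1) unfolding hfun_def by linarith
qed

lemma sum_hfun_block_indicator:
  assumes "t \<le> 2 ^ m"
  shows "(\<Sum>Z\<in>Pow (block m i). if hfun m t Z i \<longleftrightarrow> x then 1 else 0 :: real)
    = (if x then real t else 2 ^ m - real t)"
proof -
  have fin: "finite (Pow (block m i))" by (simp add: block_def)
  have card_not: "card {Z \<in> Pow (block m i). \<not> hfun m t Z i} = 2 ^ m - t"
  proof -
    have "{Z \<in> Pow (block m i). \<not> hfun m t Z i} = Pow (block m i) - {Z \<in> Pow (block m i). hfun m t Z i}"
      by blast
    also have "card \<dots> = card (Pow (block m i)) - card {Z \<in> Pow (block m i). hfun m t Z i}"
      using fin by (intro card_Diff_subset) auto
    finally show ?thesis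
      using card_hfun_block[OF assms, of i] by (simp add: card_Pow block_def)
  qed
  show ?thesis
    using fin card_hfun_block[OF assms, of i] card_not assms
    by (cases x) (simp_all add: sum.inter_filter[symmetric])
qed

lemma sum_hfun_block_indicator_sign:
  assumes "t \<le> 2 ^ m" "1 \<le> j" "j \<le> m" "t * 2 ^ j \<le> 2 ^ m"
  shows "(\<Sum>Z\<in>Pow (block m i). (if hfun m t Z i \<longleftrightarrow> x then 1 else 0) * (if (i - 1) * m + j \<in> Z then -1 else 1 :: real))
    = (if x then - real t else real t)"
proof -
  define q where "q = (i - 1) * m + j"
  have fin: "finite (Pow (block m i))" by (simp add: block_def)
  have hfun_sum: "(\<Sum>Z\<in>Pow (block m i). (if hfun m t Z i then 1 else 0) * (if q \<in> Z then -1 else 1 :: real))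
      = - real t"
  proof -
    have "(\<Sum>Z\<in>Pow (block m i). (if hfun m t Z i then 1 else 0) * (if q \<in> Z then -1 else 1 :: real))
        = - (\<Sum>Z\<in>Pow (block m i). if hfun m t Z i then 1 else 0)"
      unfolding sum_negf[symmetric] q_def using hfun_imp_leading_bit[OF _ assms(2-4)] by (intro sum.cong) auto
    then show ?thesis
      using fin card_hfun_block[OF assms(1), of i] by (simp add: sum.inter_filter[symmetric])
  qed
  have "(\<Sum>Z\<in>Pow (block m i). (if q \<in> Z then -1 else 1 :: real)) = 0"
    unfolding q_def using assms(2,3) by (intro sum_Pow_sign_member) (auto simp: block_def)
  moreover have "(\<Sum>Z\<in>Pow (block m i). (if \<not> hfun m t Z i then 1 else 0) * (if q \<in> Z then -1 else 1 :: real))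
      = (\<Sum>Z\<in>Pow (block m i). if q \<in> Z then -1 else 1)
        - (\<Sum>Z\<in>Pow (block m i). (if hfun m t Z i then 1 else 0) * (if q \<in> Z then -1 else 1))"
    unfolding sum_subtractf[symmetric] by (intro sum.cong) auto
  ultimately show ?thesis
    using hfun_sum unfolding q_def[symmetric] by (cases x) simp_all
qed

lemma mu_eq_prod: "X \<subseteq> {1..n} \<Longrightarrow> mu n p X = (\<Prod>i\<in>{1..n}. if i \<in> X then p else 1 - p)"
  by (simp add: mu_def prod.If_cases Int_absorb1 card_Diff_subset finite_subset Diff_eq[symmetric])

lemma u_eq_prod:
  "finite S \<Longrightarrow> u p S X = (\<Prod>i\<in>S. if i \<in> X then - sqrt ((1 - p) / p) else sqrt (p / (1 - p)))"
  by (simp add: u_def prod.If_cases Diff_eq)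

lemma mu_half: "card Y \<le> N \<Longrightarrow> mu N (1 / 2) Y = (1 / 2) ^ N"
  by (simp add: mu_def flip: power_add)

lemma u_half: "u (1 / 2) S Y = (-1) ^ card (S \<inter> Y)"
  by (simp add: u_def)

lemma scaled_mu_mult_u_eq_prod:
  assumes "0 < p" "p < 1" "X \<subseteq> {1..n}" "S \<subseteq> {1..n}"
  shows "sqrt (p / (1 - p)) ^ card S * (mu n p X * u p S X)
    = (\<Prod>i\<in>{1..n}. if i \<in> S then (if i \<in> X then - p else p) else (if i \<in> X then p else 1 - p))"
proof -
  define a where "a = sqrt ((1 - p) / p)"
  define c where "c = sqrt (p / (1 - p))"
  have ac: "a * c = 1" and cc: "c * c = p / (1 - p)"
    using assms(1,2) by (simp_all add: a_def c_def flip: real_sqrt_mult)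
  have "c ^ card S = (\<Prod>i\<in>{1..n}. if i \<in> S then c else 1)"
    using assms(4) by (simp add: prod.If_cases Int_absorb1)
  moreover have "u p S X = (\<Prod>i\<in>{1..n}. if i \<in> S then (if i \<in> X then - a else c) else 1)"
    using assms(4) finite_subset[OF assms(4)] by (simp add: u_eq_prod prod.If_cases Int_absorb1 a_def c_def)
  moreover have "(if i \<in> S then c else 1) * ((if i \<in> X then p else 1 - p) * (if i \<in> S then (if i \<in> X then - a else c) else 1))
      = (if i \<in> S then (if i \<in> X then - p else p) else (if i \<in> X then p else 1 - p))" for i
    using ac cc assms(2) by (auto simp: field_simps)
  ultimately show ?thesis
    unfolding c_def[symmetric] mu_eq_prod[OF assms(3)] by (simp add: prod.distrib[symmetric])
qed

lemma power_card_Int_eq_prod_block: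
  fixes c :: "'a :: comm_monoid_mult"
  assumes "Y \<subseteq> {1..m * n}"
  shows "c ^ card (T \<inter> Y) = (\<Prod>i\<in>{1..n}. c ^ card (T \<inter> (Y \<inter> block m i)))"
proof -
  have split: "T \<inter> Y = (\<Union>i\<in>{1..n}. T \<inter> (Y \<inter> block m i))"
    using assms unfolding UN_block[symmetric] by blast
  have "disjoint_family_on (block m) {1..n}"
    by (rule disjoint_family_on_mono[OF _ disjoint_family_on_block]) auto
  then have "disjoint_family_on (\<lambda>i. T \<inter> (Y \<inter> block m i)) {1..n}"
    unfolding disjoint_family_on_def by blast
  then have "card (T \<inter> Y) = (\<Sum>i\<in>{1..n}. card (T \<inter> (Y \<inter> block m i)))"
    unfolding split by (rule card_UN_disjoint') (simp_all add: block_def)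
  then show ?thesis by (simp add: power_sum)
qed

lemma prod_indicator:
  "finite A \<Longrightarrow> (\<Prod>i\<in>A. if P i then 1 else 0 :: 'a :: comm_semiring_1) = (if \<forall>i\<in>A. P i then 1 else 0)"
  by (cases "\<forall>i\<in>A. P i") (simp_all, intro prod_zero, auto)

lemma sum_Red_fibre_sign:
  assumes "X \<subseteq> {1..n}"
  shows "(\<Sum>Y | Y \<in> Pow {1..m * n} \<and> {i \<in> {1..n}. hfun m t Y i} = X. (-1 :: 'a :: comm_ring_1) ^ card (T \<inter> Y))
    = (\<Prod>i\<in>{1..n}. \<Sum>Z\<in>Pow (block m i). (if hfun m t Z i \<longleftrightarrow> i \<in> X then 1 else 0) * (-1) ^ card (T \<inter> Z))"
proof -
  have disj: "disjoint_family_on (block m) {1..n}"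
    by (rule disjoint_family_on_mono[OF _ disjoint_family_on_block]) auto
  have factor: "(if {i \<in> {1..n}. hfun m t Y i} = X then (-1 :: 'a) ^ card (T \<inter> Y) else 0)
      = (\<Prod>i\<in>{1..n}. (if hfun m t (Y \<inter> block m i) i \<longleftrightarrow> i \<in> X then 1 else 0) * (-1) ^ card (T \<inter> (Y \<inter> block m i)))"
    if "Y \<in> Pow {1..m * n}" for Y
  proof -
    have "{i \<in> {1..n}. hfun m t Y i} = X \<longleftrightarrow> (\<forall>i\<in>{1..n}. hfun m t (Y \<inter> block m i) i \<longleftrightarrow> i \<in> X)"
      using assms by (auto simp: hfun_Int_block)
    then have indicator: "(if {i \<in> {1..n}. hfun m t Y i} = X then 1 else 0 :: 'a)
        = (\<Prod>i\<in>{1..n}. if hfun m t (Y \<inter> block m i) i \<longleftrightarrow> i \<in> X then 1 else 0)"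
      by (subst prod_indicator) simp_all
    have sign: "(-1 :: 'a) ^ card (T \<inter> Y) = (\<Prod>i\<in>{1..n}. (-1) ^ card (T \<inter> (Y \<inter> block m i)))"
      using that by (intro power_card_Int_eq_prod_block) auto
    have "(if {i \<in> {1..n}. hfun m t Y i} = X then (-1 :: 'a) ^ card (T \<inter> Y) else 0)
        = (if {i \<in> {1..n}. hfun m t Y i} = X then 1 else 0) * (-1) ^ card (T \<inter> Y)"
      by simp
    also have "\<dots> = (\<Prod>i\<in>{1..n}. (if hfun m t (Y \<inter> block m i) i \<longleftrightarrow> i \<in> X then 1 else 0) * (-1) ^ card (T \<inter> (Y \<inter> block m i)))"
      unfolding indicator sign by (rule prod.distrib[symmetric])
    finally show ?thesis .
  qed
  have "(\<Sum>Y | Y \<in> Pow {1..m * n} \<and> {i \<in> {1..n}. hfun m t Y i} = X. (-1 :: 'a) ^ card (T \<inter> Y))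
      = (\<Sum>Y\<in>Pow {1..m * n}. if {i \<in> {1..n}. hfun m t Y i} = X then (-1) ^ card (T \<inter> Y) else 0)"
    by (rule sum.inter_filter) simp
  also have "\<dots> = (\<Sum>Y\<in>Pow (\<Union>i\<in>{1..n}. block m i).
      \<Prod>i\<in>{1..n}. (if hfun m t (Y \<inter> block m i) i \<longleftrightarrow> i \<in> X then 1 else 0) * (-1) ^ card (T \<inter> (Y \<inter> block m i)))"
    unfolding UN_block by (rule sum.cong[OF refl factor])
  also have "\<dots> = (\<Prod>i\<in>{1..n}. \<Sum>Z\<in>Pow (block m i). (if hfun m t Z i \<longleftrightarrow> i \<in> X then 1 else 0) * (-1) ^ card (T \<inter> Z))"
    by (rule sum_Pow_UN_prod[OF _ _ disj]) (simp_all add: block_def)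
  finally show ?thesis .
qed

definition block_choice :: "nat \<Rightarrow> nat set \<Rightarrow> (nat \<Rightarrow> nat) \<Rightarrow> nat set" where
  "block_choice m S J = (\<lambda>i. (i - 1) * m + J i) ` S"

lemma block_choice_Int_block:
  assumes "0 \<notin> S" "\<And>i. i \<in> S \<Longrightarrow> 1 \<le> J i \<and> J i \<le> m" "1 \<le> i"
  shows "block_choice m S J \<inter> block m i = (if i \<in> S then {(i - 1) * m + J i} else {})"
proof -
  have "i' = i" if "i' \<in> S" "(i' - 1) * m + J i' \<in> block m i" for i'
  proof -
    have "i' - 1 = i - 1"
      using block_div[OF that(2)] block_div[OF block_pos_mem] assms(2)[OF that(1)] by metis
    then show ?thesis using assms(1,3) that(1) by (cases i') auto
  qed
  moreover have "(i - 1) * m + J i \<in> block m i" if "i \<in> S"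
    using assms(2)[OF that] by (auto simp: block_def)
  ultimately show ?thesis by (auto simp: block_choice_def)
qed

lemma sum_hfun_block_choice_sign:
  assumes "0 \<notin> S" "1 \<le> i" "t \<le> 2 ^ m"
    and J: "\<And>i. i \<in> S \<Longrightarrow> 1 \<le> J i \<and> J i \<le> m \<and> t * 2 ^ J i \<le> 2 ^ m"
  shows "(\<Sum>Z\<in>Pow (block m i). (if hfun m t Z i \<longleftrightarrow> x then 1 else 0) * (-1) ^ card (block_choice m S J \<inter> Z))
    = (if i \<in> S then (if x then - real t else real t) else (if x then real t else 2 ^ m - real t))"
proof -
  have "block_choice m S J \<inter> block m i = (if i \<in> S then {(i - 1) * m + J i} else {})"
    using assms by (intro block_choice_Int_block) auto
  then have sign: "(-1) ^ card (block_choice m S J \<inter> Z) = (if i \<in> S \<and> (i - 1) * m + J i \<in> Z then -1 else 1 :: real)"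
    if "Z \<in> Pow (block m i)" for Z
  proof -
    have "block_choice m S J \<inter> Z = block_choice m S J \<inter> block m i \<inter> Z" using that by blast
    then show ?thesis using \<open>block_choice m S J \<inter> block m i = _\<close> by auto
  qed
  show ?thesis
  proof (cases "i \<in> S")
    case True
    have "(\<Sum>Z\<in>Pow (block m i). (if hfun m t Z i \<longleftrightarrow> x then 1 else 0) * (-1) ^ card (block_choice m S J \<inter> Z) :: real)
        = (\<Sum>Z\<in>Pow (block m i). (if hfun m t Z i \<longleftrightarrow> x then 1 else 0) * (if (i - 1) * m + J i \<in> Z then -1 else 1))"
      using True by (intro sum.cong refl) (simp add: sign)
    then show ?thesis
      using True sum_hfun_block_indicator_sign[of t m "J i" i x] J[OF True] assms(3) by simp
  next
    case False
    have "(\<Sum>Z\<in>Pow (block m i). (if hfun m t Z i \<longleftrightarrow> x then 1 else 0) * (-1) ^ card (block_choice m S J \<inter> Z) :: real)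
        = (\<Sum>Z\<in>Pow (block m i). if hfun m t Z i \<longleftrightarrow> x then 1 else 0)"
      using False by (intro sum.cong refl) (simp add: sign)
    then show ?thesis
      using False sum_hfun_block_indicator[of t m i x] assms(3) by simp
  qed
qed

lemma fcoef_Red_block_choice:
  fixes f :: "nat set \<Rightarrow> real"
  assumes "0 < t" "t < 2 ^ m" "p = real t / 2 ^ m" "S \<subseteq> {1..n}"
    and J: "\<And>i. i \<in> S \<Longrightarrow> 1 \<le> J i \<and> J i \<le> m \<and> t * 2 ^ J i \<le> 2 ^ m"
  shows "fcoef (m * n) (1 / 2) (Red n m t f) (block_choice m S J) = sqrt (p / (1 - p)) ^ card S * fcoef n p f S"
proof -
  define T where "T = block_choice m S J"
  define H where "H Y = {i \<in> {1..n}. hfun m t Y i}" for Y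
  have p: "0 < p" "p < 1" using assms(1-3) by simp_all
  have block_factor: "(1 / 2) ^ m * (\<Sum>Z\<in>Pow (block m i). (if hfun m t Z i \<longleftrightarrow> i \<in> X then 1 else 0) * (-1) ^ card (T \<inter> Z))
      = (if i \<in> S then (if i \<in> X then - p else p) else (if i \<in> X then p else 1 - p))"
    if "i \<in> {1..n}" for X i
    unfolding T_def using assms(2-4) J that
    by (subst sum_hfun_block_choice_sign) (auto simp: field_simps)
  have "fcoef (m * n) (1 / 2) (Red n m t f) T
      = (\<Sum>Y\<in>Pow {1..m * n}. f (H Y) * ((1 / 2) ^ (m * n) * (-1) ^ card (T \<inter> Y)))"
    unfolding fcoef_def Red_def H_def
    by (intro sum.cong refl) (simp add: mu_half u_half card_mono[of "{1..m * n}", simplified])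
  also have "\<dots> = (\<Sum>X\<in>Pow {1..n}. f X * ((1 / 2) ^ (m * n) * (\<Sum>Y | Y \<in> Pow {1..m * n} \<and> H Y = X. (-1) ^ card (T \<inter> Y))))"
    by (subst sum.group[symmetric, of "Pow {1..m * n}" "Pow {1..n}" H]) (auto simp: H_def sum_distrib_left intro!: sum.cong)
  also have "\<dots> = (\<Sum>X\<in>Pow {1..n}. f X * sqrt (p / (1 - p)) ^ card S * (mu n p X * u p S X))"
  proof (intro sum.cong refl)
    fix X assume X: "X \<in> Pow {1..n}"
    have "(1 / 2 :: real) ^ (m * n) * (\<Sum>Y | Y \<in> Pow {1..m * n} \<and> H Y = X. (-1) ^ card (T \<inter> Y))
        = (\<Prod>i\<in>{1..n}. (1 / 2) ^ m) * (\<Prod>i\<in>{1..n}. \<Sum>Z\<in>Pow (block m i).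
            (if hfun m t Z i \<longleftrightarrow> i \<in> X then 1 else 0) * (-1) ^ card (T \<inter> Z))"
      unfolding H_def sum_Red_fibre_sign[OF PowD[OF X]] by (simp add: power_mult)
    also have "\<dots> = (\<Prod>i\<in>{1..n}. if i \<in> S then (if i \<in> X then - p else p) else (if i \<in> X then p else 1 - p))"
      unfolding prod.distrib[symmetric] by (rule prod.cong[OF refl block_factor])
    also have "\<dots> = sqrt (p / (1 - p)) ^ card S * (mu n p X * u p S X)"
      using p \<open>X \<in> Pow {1..n}\<close> assms(4) by (simp add: scaled_mu_mult_u_eq_prod)
    finally show "f X * ((1 / 2) ^ (m * n) * (\<Sum>Y | Y \<in> Pow {1..m * n} \<and> H Y = X. (-1) ^ card (T \<inter> Y)))
        = f X * sqrt (p / (1 - p)) ^ card S * (mu n p X * u p S X)" by simp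
  qed
  also have "\<dots> = sqrt (p / (1 - p)) ^ card S * fcoef n p f S"
    unfolding fcoef_def sum_distrib_left by (intro sum.cong refl) (simp add: ac_simps)
  finally show ?thesis unfolding T_def .
qed

lemma block_pos_decode:
  fixes i j m :: nat
  assumes "1 \<le> j" "j \<le> m"
  shows "((i - 1) * m + j - 1) div m = i - 1" "((i - 1) * m + j - 1) mod m = j - 1"
proof -
  obtain j' where "j = Suc j'" using assms(1) by (cases j) auto
  then have "(i - 1) * m + j - 1 = j' + (i - 1) * m" "j' < m" using assms(2) by simp_all
  then show "((i - 1) * m + j - 1) div m = i - 1" "((i - 1) * m + j - 1) mod m = j - 1"
    using \<open>j = Suc j'\<close> by simp_all
qed

lemma inj_on_block_choice:
  "inj_on (\<lambda>(S, J). block_choice m S J) (SIGMA S:Pow {1..}. S \<rightarrow>\<^sub>E {1..m})"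
proof (rule inj_onI)
  define decode where "decode x = ((x - 1) div m + 1, (x - 1) mod m + 1)" for x
  have graph: "decode ` block_choice m A K = (\<lambda>i. (i, K i)) ` A"
    if "A \<subseteq> {1..}" "K \<in> A \<rightarrow>\<^sub>E {1..m}" for A K
  proof -
    have "decode ((i - 1) * m + K i) = (i, K i)" if "i \<in> A" for i
    proof -
      have "1 \<le> K i" "K i \<le> m" "1 \<le> i" using that \<open>A \<subseteq> {1..}\<close> \<open>K \<in> _\<close> by auto
      then show ?thesis using block_pos_decode[of "K i" m i] by (simp add: decode_def)
    qed
    then show ?thesis unfolding block_choice_def image_image by (rule image_cong[OF refl])
  qed
  fix SJ SJ'
  assume "SJ \<in> (SIGMA S:Pow {1..}. S \<rightarrow>\<^sub>E {1..m})" "SJ' \<in> (SIGMA S:Pow {1..}. S \<rightarrow>\<^sub>E {1..m})"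
    and eq: "(\<lambda>(S, J). block_choice m S J) SJ = (\<lambda>(S, J). block_choice m S J) SJ'"
  then obtain S J S' J' where SJ: "SJ = (S, J)" "SJ' = (S', J')"
    and dom: "S \<subseteq> {1..}" "J \<in> S \<rightarrow>\<^sub>E {1..m}" "S' \<subseteq> {1..}" "J' \<in> S' \<rightarrow>\<^sub>E {1..m}"
    by blast
  have graph_eq: "(\<lambda>i. (i, J i)) ` S = (\<lambda>i. (i, J' i)) ` S'"
    using graph[OF dom(1,2)] graph[OF dom(3,4)] eq unfolding SJ by simp
  then have "fst ` (\<lambda>i. (i, J i)) ` S = fst ` (\<lambda>i. (i, J' i)) ` S'" by (rule arg_cong)
  then have "S = S'" by (simp add: image_image)
  moreover have "J i = J' i" if "i \<in> S" for i
  proof -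
    have "(i, J i) \<in> (\<lambda>i. (i, J' i)) ` S'" using graph_eq that by blast
    then show ?thesis by auto
  qed
  ultimately show "SJ = SJ'"
    unfolding SJ using dom(2,4) by (auto intro: PiE_ext)
qed

lemma block_choice_subset:
  assumes "S \<subseteq> {1..n}" "J \<in> S \<rightarrow>\<^sub>E {1..m}"
  shows "block_choice m S J \<subseteq> {1..m * n}"
proof -
  have "(i - 1) * m + J i \<in> block m i" if "i \<in> S" for i
    using assms(2) that by (auto simp: block_def)
  then show ?thesis
    unfolding UN_block[symmetric] block_choice_def using assms(1) by blast
qed

lemma card_block_choice:
  assumes "S \<subseteq> {1..}" "J \<in> S \<rightarrow>\<^sub>E {1..m}"
  shows "card (block_choice m S J) = card S"
proof -
  have "inj_on (\<lambda>i. (i - 1) * m + J i) S"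
  proof (rule inj_onI)
    fix i i' assume "i \<in> S" "i' \<in> S" "(i - 1) * m + J i = (i' - 1) * m + J i'"
    moreover have "1 \<le> J i" "J i \<le> m" "1 \<le> J i'" "J i' \<le> m"
      using assms(2) \<open>i \<in> S\<close> \<open>i' \<in> S\<close> by auto
    ultimately have "i - 1 = i' - 1"
      using block_pos_decode(1)[of "J i" m i] block_pos_decode(1)[of "J i'" m i'] by metis
    moreover have "1 \<le> i" "1 \<le> i'" using assms(1) \<open>i \<in> S\<close> \<open>i' \<in> S\<close> by auto
    ultimately show "i = i'" by simp
  qed
  then show ?thesis unfolding block_choice_def by (rule card_image)
qed

lemma le_floor_log2_iff: "0 < x \<Longrightarrow> int j \<le> \<lfloor>log 2 x\<rfloor> \<longleftrightarrow> 2 ^ j \<le> x"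
  by (simp add: le_floor_iff le_log_iff powr_realpow)

lemma sum_sq_fcoef_Red_ge:
  fixes f :: "nat set \<Rightarrow> real"
  assumes "0 < t" "t < 2 ^ m" "p = real t / 2 ^ m"
    and "t * 2 ^ k \<le> 2 ^ m"
  shows "(\<Sum>T\<in>{T. T \<subseteq> {1..m * n} \<and> card T = d}. (fcoef (m * n) (1 / 2) (Red n m t f) T)\<^sup>2)
    \<ge> (p * real k / (1 - p)) ^ d * (\<Sum>S\<in>{S. S \<subseteq> {1..n} \<and> card S = d}. (fcoef n p f S)\<^sup>2)"
proof -
  define c where "c = sqrt (p / (1 - p))"
  define \<S> where "\<S> = {S. S \<subseteq> {1..n} \<and> card S = d}"
  define I where "I = (SIGMA S:\<S>. S \<rightarrow>\<^sub>E {1..k})"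
  define \<Phi> where "\<Phi> = (\<lambda>(S, J). block_choice m S J)"
  have k: "j \<le> m \<and> t * 2 ^ j \<le> 2 ^ m" if "j \<le> k" for j
  proof -
    have "t * 2 ^ j \<le> t * 2 ^ k" using that by simp
    then have "t * 2 ^ j \<le> 2 ^ m" using assms(4) by linarith
    moreover have "2 ^ j \<le> t * 2 ^ j" using assms(1) by simp
    ultimately have "(2::nat) ^ j \<le> 2 ^ m" by linarith
    with \<open>t * 2 ^ j \<le> 2 ^ m\<close> show ?thesis by simp
  qed
  have fin\<S>: "finite \<S>" unfolding \<S>_def by (rule finite_subset[of _ "Pow {1..n}"]) auto
  have I_dom: "I \<subseteq> (SIGMA S:Pow {1..}. S \<rightarrow>\<^sub>E {1..m})"
    unfolding I_def \<S>_def using k by (force simp: PiE_iff)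
  have \<Phi>_I: "\<Phi> ` I \<subseteq> {T. T \<subseteq> {1..m * n} \<and> card T = d}"
  proof (rule image_subsetI)
    fix z assume "z \<in> I"
    then obtain S J where z: "z = (S, J)" "S \<subseteq> {1..n}" "card S = d" "S \<subseteq> {1..}" "J \<in> S \<rightarrow>\<^sub>E {1..m}"
      using I_dom unfolding I_def \<S>_def by blast
    then show "\<Phi> z \<in> {T. T \<subseteq> {1..m * n} \<and> card T = d}"
      unfolding \<Phi>_def using block_choice_subset card_block_choice by auto
  qed
  have "(p * real k / (1 - p)) ^ d * (\<Sum>S\<in>\<S>. (fcoef n p f S)\<^sup>2)
      = (\<Sum>S\<in>\<S>. real k ^ d * (c ^ d * fcoef n p f S)\<^sup>2)"
  proof -
    have "c\<^sup>2 = p / (1 - p)" using assms(1-3) by (simp add: c_def)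
    moreover have "(c ^ d)\<^sup>2 = (c\<^sup>2) ^ d" by (simp flip: power_mult add: mult.commute)
    ultimately show ?thesis
      by (simp add: sum_distrib_left sum_divide_distrib power_mult_distrib power_divide ac_simps)
  qed
  also have "\<dots> = (\<Sum>(S, J)\<in>I. (c ^ d * fcoef n p f S)\<^sup>2)"
    unfolding I_def using fin\<S>
    by (subst sum.Sigma[symmetric])
      (auto simp: \<S>_def card_PiE finite_subset intro!: sum.cong finite_PiE)
  also have "\<dots> = (\<Sum>(S, J)\<in>I. (fcoef (m * n) (1 / 2) (Red n m t f) (block_choice m S J))\<^sup>2)"
    using assms(1-3) k unfolding I_def \<S>_def c_def
    by (intro sum.cong refl) (auto simp: fcoef_Red_block_choice PiE_iff)
  also have "\<dots> = (\<Sum>T\<in>\<Phi> ` I. (fcoef (m * n) (1 / 2) (Red n m t f) T)\<^sup>2)"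
    unfolding \<Phi>_def using inj_on_subset[OF inj_on_block_choice I_dom]
    by (subst sum.reindex) (simp_all add: case_prod_unfold)
  also have "\<dots> \<le> (\<Sum>T\<in>{T. T \<subseteq> {1..m * n} \<and> card T = d}. (fcoef (m * n) (1 / 2) (Red n m t f) T)\<^sup>2)"
    using \<Phi>_I by (intro sum_mono2) (auto intro: finite_subset[of _ "Pow {1..m * n}"])
  finally show ?thesis unfolding \<S>_def .
qed

theorem theorem1p2:
  fixes m t n d :: nat and p :: real and f :: "nat set \<Rightarrow> real"
  assumes "m \<ge> 1" and "1 \<le> t" and "t \<le> 2 ^ (m - 1)"
    and "p = real t / 2 ^ m"
    and "1 \<le> d" and "d \<le> n"
  shows "(\<Sum>S\<in>{S. S \<subseteq> {1..m*n} \<and> card S = d}. (fcoef (m*n) (1/2) (Red n m t f) S)\<^sup>2)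
         \<ge> (p * of_int \<lfloor>log 2 (1 / p)\<rfloor> / (1 - p)) ^ d
           * (\<Sum>S\<in>{S. S \<subseteq> {1..n} \<and> card S = d}. (fcoef n p f S)\<^sup>2)"
proof -
  have "(2::nat) ^ m = 2 * 2 ^ (m - 1)" using assms(1) by (simp flip: power_Suc)
  then have "t < 2 ^ m" using assms(2,3) by linarith
  have t_real: "0 < real t" "real t < 2 ^ m"
    using assms(2) \<open>t < 2 ^ m\<close> by (simp, metis of_nat_less_iff of_nat_numeral of_nat_power)
  have inv_p: "1 / p = 2 ^ m / real t" and "0 < p" using assms(2,4) by simp_all
  define k where "k = nat \<lfloor>log 2 (1 / p)\<rfloor>"
  have "int 0 \<le> \<lfloor>log 2 (1 / p)\<rfloor>"
    using t_real by (intro le_floor_log2_iff[THEN iffD2]) (simp_all add: inv_p field_simps)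
  then have k: "of_int \<lfloor>log 2 (1 / p)\<rfloor> = real k" by (simp add: k_def)
  have "2 ^ k \<le> 2 ^ m / real t"
    using le_floor_log2_iff[of "1 / p" k] \<open>0 < p\<close> \<open>int 0 \<le> _\<close> unfolding k_def inv_p[symmetric] by simp
  then have "real (t * 2 ^ k) \<le> real (2 ^ m)"
    using t_real by (simp add: field_simps)
  then have "t * 2 ^ k \<le> 2 ^ m" by (simp only: of_nat_le_iff)
  then show ?thesis
    unfolding k using \<open>t < 2 ^ m\<close> assms(2,4) by (intro sum_sq_fcoef_Red_ge) auto
qed

end
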